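(* Let $X$ be an infinite Tychonoff space and let $E$ be a Banach space. If $T:C_p(X)\to E_w$ is a sequentially continuous linear operator, then for every sequence $\{U_n: n\in \omega\}$ of pairwise disjoint nonempty open subsets of $X$ there exists $N$ such that $T(f)=0$ for all $n\geqslant N$ and all $f\in C(X)$ with $\operatorname{supp}(f)\subset U_n$.
   Context: $C_p(X)$ is the space $C(X)$ of continuous real-valued functions on $X$ with the pointwise convergence topology; $E_w$ is $E$ with its weak topology. For $f:X\to\mathbb{R}$, $\operatorname{supp}(f)=\{t\in X: f(t)\neq 0\}$. A map is sequentially continuous if it sends convergent sequences to convergent sequences. *)

theory Defs
  imports "HOL-Analysis.Analysis"
begin

definition supp :: "('a \<Rightarrow> real) \<Rightarrow> 'a set" where
  "supp f = {t. f t \<noteq> 0}"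

definition tychonoff_type :: "'a::topological_space itself \<Rightarrow> bool" where
  "tychonoff_type _ \<longleftrightarrow> completely_regular_space (euclidean :: 'a topology)
                      \<and> t1_space (euclidean :: 'a topology)"

text \<open>Sequential continuity of T : C_p(X) \<rightarrow> E_w: pointwise convergence of continuous
  functions is sent to weak convergence in E.\<close>
definition seq_cont_Cp_weak :: "(('a::topological_space \<Rightarrow> real) \<Rightarrow> 'e::real_normed_vector) \<Rightarrow> bool" where
  "seq_cont_Cp_weak T \<longleftrightarrow>
     (\<forall>fs f. (\<forall>n. continuous_on UNIV (fs n)) \<and> continuous_on UNIV f \<and>
             (\<forall>x. (\<lambda>n. fs n x) \<longlonglongrightarrow> f x) \<longrightarrow>
             (\<forall>\<phi>::'e \<Rightarrow> real. bounded_linear \<phi> \<longrightarrow> (\<lambda>n. \<phi> (T (fs n))) \<longlonglongrightarrow> \<phi> (T f)))"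

definition linear_on_C :: "(('a::topological_space \<Rightarrow> real) \<Rightarrow> 'e::real_vector) \<Rightarrow> bool" where
  "linear_on_C T \<longleftrightarrow>
     (\<forall>f g. continuous_on UNIV f \<and> continuous_on UNIV g \<longrightarrow> T (\<lambda>x. f x + g x) = T f + T g) \<and>
     (\<forall>c f. continuous_on UNIV f \<longrightarrow> T (\<lambda>x. c * f x) = c *\<^sub>R T f)"

end

theory Submission
  imports Defs
begin

text \<open>If infinitely many \<open>U\<^sub>n\<close> carried functions \<open>f\<^sub>n\<close> with \<open>T f\<^sub>n \<noteq> 0\<close>, then, the supports
  being pairwise disjoint, every rescaled sequence \<open>c\<^sub>n f\<^sub>n\<close> converges pointwise to \<open>0\<close>, so
  \<open>c\<^sub>n \<phi>(T f\<^sub>n) \<longrightarrow> 0\<close> for every continuous functional \<open>\<phi>\<close>. The kernels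
  \<open>{\<phi>. \<phi>(T f\<^sub>n) = 0}\<close> are closed and, by Hahn-Banach, nowhere dense in the complete dual
  space, so by Baire's theorem some \<open>\<phi>\<close> vanishes at no \<open>T f\<^sub>n\<close>; the choice
  \<open>c\<^sub>n = 1 / \<phi>(T f\<^sub>n)\<close> then gives a contradiction.\<close>

text \<open>A linear functional on a subspace, dominated by the norm, is encoded by its graph, so that
  extensions are supersets and Zorn's lemma applies directly in the proof of Hahn-Banach.\<close>

definition dominated_linear_graph :: "('a::real_normed_vector \<times> real) set \<Rightarrow> bool" where
  "dominated_linear_graph G \<longleftrightarrow>
     (0, 0) \<in> G \<and>
     (\<forall>x a y b. (x, a) \<in> G \<longrightarrow> (y, b) \<in> G \<longrightarrow> (x + y, a + b) \<in> G) \<and>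
     (\<forall>c x a. (x, a) \<in> G \<longrightarrow> (c *\<^sub>R x, c * a) \<in> G) \<and>
     (\<forall>x a b. (x, a) \<in> G \<longrightarrow> (x, b) \<in> G \<longrightarrow> a = b) \<and>
     (\<forall>x a. (x, a) \<in> G \<longrightarrow> a \<le> norm x)"

lemma dominated_linear_graphD:
  assumes "dominated_linear_graph G"
  shows dominated_linear_graph_zero: "(0, 0) \<in> G"
    and dominated_linear_graph_add: "(x, a) \<in> G \<Longrightarrow> (y, b) \<in> G \<Longrightarrow> (x + y, a + b) \<in> G"
    and dominated_linear_graph_scaleR: "(x, a) \<in> G \<Longrightarrow> (c *\<^sub>R x, c * a) \<in> G"
    and dominated_linear_graph_unique: "(x, a) \<in> G \<Longrightarrow> (x, b) \<in> G \<Longrightarrow> a = b"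
    and dominated_linear_graph_le_norm: "(x, a) \<in> G \<Longrightarrow> a \<le> norm x"
  using assms unfolding dominated_linear_graph_def by blast+

text \<open>The value \<open>c\<close> to be assigned to a new vector \<open>y\<close>: the constraints coming from
  \<open>\<plusminus>y\<close> are compatible by the triangle inequality.\<close>

lemma dominated_linear_graph_extension_constant:
  assumes G: "dominated_linear_graph G"
  obtains c where "\<And>x a. (x, a) \<in> G \<Longrightarrow> a - norm (x - y) \<le> c"
    and "\<And>x a. (x, a) \<in> G \<Longrightarrow> c \<le> norm (x + y) - a"
proof -
  define S where "S = {a - norm (x - y) | x a. (x, a) \<in> G}"
  have lower_le_upper: "a - norm (x - y) \<le> norm (x' + y) - a'"
    if "(x, a) \<in> G" "(x', a') \<in> G" for x a x' a'
  proof -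
    have "a + a' \<le> norm (x + x')"
      using G that by (blast intro: dominated_linear_graph_le_norm dominated_linear_graph_add)
    also have "\<dots> \<le> norm (x - y) + norm (x' + y)"
      using norm_triangle_ineq[of "x - y" "x' + y"] by simp
    finally show ?thesis by simp
  qed
  have "S \<noteq> {}"
    using dominated_linear_graph_zero[OF G] unfolding S_def by blast
  moreover have "bdd_above S"
    unfolding S_def bdd_above_def using lower_le_upper[OF _ dominated_linear_graph_zero[OF G]]
    by fastforce
  ultimately show thesis
    by (intro that[of "Sup S"]) (auto intro!: cSup_upper cSup_least simp: S_def lower_le_upper)
qed

lemma dominated_linear_graph_extension_le_norm:
  assumes G: "dominated_linear_graph G"
    and lower: "\<And>x a. (x, a) \<in> G \<Longrightarrow> a - norm (x - y) \<le> c"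
    and upper: "\<And>x a. (x, a) \<in> G \<Longrightarrow> c \<le> norm (x + y) - a"
    and "(u, p) \<in> G"
  shows "p + t * c \<le> norm (u + t *\<^sub>R y)"
proof (cases t "0::real" rule: linorder_cases)
  case less
  define s where "s = - t"
  have "s > 0" using less by (simp add: s_def)
  have "inverse s * p - norm (u /\<^sub>R s - y) \<le> c"
    using lower[OF dominated_linear_graph_scaleR[OF G \<open>(u, p) \<in> G\<close>]] .
  then have "p - s * norm (u /\<^sub>R s - y) \<le> s * c"
    using \<open>s > 0\<close> by (simp add: field_simps)
  also have "s * norm (u /\<^sub>R s - y) = norm (s *\<^sub>R (u /\<^sub>R s - y))"
    using \<open>s > 0\<close> by simp
  also have "s *\<^sub>R (u /\<^sub>R s - y) = u + t *\<^sub>R y"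
    using \<open>s > 0\<close> by (simp add: s_def algebra_simps)
  finally show ?thesis by (simp add: s_def)
next
  case equal
  then show ?thesis using G \<open>(u, p) \<in> G\<close> by (simp add: dominated_linear_graph_le_norm)
next
  case greater
  have "c \<le> norm (u /\<^sub>R t + y) - inverse t * p"
    using upper[OF dominated_linear_graph_scaleR[OF G \<open>(u, p) \<in> G\<close>]] .
  then have "t * c \<le> t * norm (u /\<^sub>R t + y) - p"
    using greater by (simp add: field_simps)
  also have "t * norm (u /\<^sub>R t + y) = norm (t *\<^sub>R (u /\<^sub>R t + y))"
    using greater by simp
  also have "t *\<^sub>R (u /\<^sub>R t + y) = u + t *\<^sub>R y"
    using greater by (simp add: algebra_simps)
  finally show ?thesis by simp
qed

lemma dominated_linear_graph_line_coeff_unique: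
  assumes G: "dominated_linear_graph G" and y: "y \<notin> fst ` G"
    and "(u, p) \<in> G" "(u', p') \<in> G" and eq: "u + t *\<^sub>R y = u' + t' *\<^sub>R y"
  shows "t = t'"
proof (rule ccontr)
  assume "t \<noteq> t'"
  have "(u + (-1) *\<^sub>R u', p + (-1) * p') \<in> G"
    using assms by (blast intro: dominated_linear_graph_add dominated_linear_graph_scaleR)
  from dominated_linear_graph_scaleR[OF G this, of "inverse (t' - t)"]
  have "inverse (t' - t) *\<^sub>R (u - u') \<in> fst ` G" by force
  moreover have "u - u' = (t' - t) *\<^sub>R y"
    using eq by (simp add: algebra_simps)
  ultimately show False
    using y \<open>t \<noteq> t'\<close> by simp
qed

lemma dominated_linear_graph_extend:
  assumes G: "dominated_linear_graph G" and y: "y \<notin> fst ` G"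
  shows "\<exists>G'. dominated_linear_graph G' \<and> G \<subset> G'"
proof -
  obtain c where lower: "\<And>x a. (x, a) \<in> G \<Longrightarrow> a - norm (x - y) \<le> c"
    and upper: "\<And>x a. (x, a) \<in> G \<Longrightarrow> c \<le> norm (x + y) - a"
    using dominated_linear_graph_extension_constant[OF G] by blast
  define G' where "G' = {(u + t *\<^sub>R y, p + t * c) | u p t. (u, p) \<in> G}"
  have G'I: "(u + t *\<^sub>R y, p + t * c) \<in> G'" if "(u, p) \<in> G" for u p t
    unfolding G'_def using that by blast
  have G'E: "\<exists>u p t. (u, p) \<in> G \<and> x = u + t *\<^sub>R y \<and> a = p + t * c" if "(x, a) \<in> G'" for x a
    using that unfolding G'_def by blast
  have "dominated_linear_graph G'"
    unfolding dominated_linear_graph_def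
  proof (intro conjI allI impI)
    show "(0, 0) \<in> G'" using G'I[OF dominated_linear_graph_zero[OF G], of 0] by simp
  next
    fix x a x' a' assume "(x, a) \<in> G'" "(x', a') \<in> G'"
    then obtain u p t u' p' t' where "(u, p) \<in> G" "(u', p') \<in> G"
      and "x = u + t *\<^sub>R y" "a = p + t * c" "x' = u' + t' *\<^sub>R y" "a' = p' + t' * c"
      using G'E by meson
    then show "(x + x', a + a') \<in> G'"
      using G'I[OF dominated_linear_graph_add[OF G], of u p u' p' "t + t'"] by (simp add: algebra_simps)
  next
    fix r x a assume "(x, a) \<in> G'"
    then obtain u p t where "(u, p) \<in> G" "x = u + t *\<^sub>R y" "a = p + t * c"
      using G'E by meson
    then show "(r *\<^sub>R x, r * a) \<in> G'"
      using G'I[OF dominated_linear_graph_scaleR[OF G], of u p r "r * t"] by (simp add: algebra_simps)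
  next
    fix x a a' assume "(x, a) \<in> G'" "(x, a') \<in> G'"
    then obtain u p t u' p' t' where "(u, p) \<in> G" "(u', p') \<in> G"
      and "x = u + t *\<^sub>R y" "a = p + t * c" "x = u' + t' *\<^sub>R y" "a' = p' + t' * c"
      using G'E by meson
    moreover from this have "t = t'"
      using dominated_linear_graph_line_coeff_unique[OF G y] by metis
    ultimately show "a = a'"
      using dominated_linear_graph_unique[OF G] by auto
  next
    fix x a assume "(x, a) \<in> G'"
    then show "a \<le> norm x"
      using G'E dominated_linear_graph_extension_le_norm[OF G lower upper] by blast
  qed
  moreover have "G \<subseteq> G'"
    using G'I[of _ _ 0] by auto
  moreover have "y \<in> fst ` G'"
    using G'I[OF dominated_linear_graph_zero[OF G], of 1] by force
  ultimately show ?thesis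
    using y by blast
qed

lemma dominated_linear_graph_Union_chain:
  assumes "\<C> \<noteq> {}" "chain\<^sub>\<subseteq> \<C>" and dom: "\<And>G. G \<in> \<C> \<Longrightarrow> dominated_linear_graph G"
  shows "dominated_linear_graph (\<Union>\<C>)"
proof -
  have common: "\<exists>G\<in>\<C>. p \<in> G \<and> q \<in> G" if p: "p \<in> \<Union>\<C>" and q: "q \<in> \<Union>\<C>" for p q
  proof -
    obtain G H where "G \<in> \<C>" "H \<in> \<C>" "p \<in> G" "q \<in> H" using p q by blast
    moreover have "G \<subseteq> H \<or> H \<subseteq> G"
      using \<open>chain\<^sub>\<subseteq> \<C>\<close> \<open>G \<in> \<C>\<close> \<open>H \<in> \<C>\<close> unfolding chain_subset_def by blast
    ultimately show ?thesis by blast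
  qed
  show ?thesis
    unfolding dominated_linear_graph_def
  proof (intro conjI allI impI)
    obtain G where "G \<in> \<C>" using \<open>\<C> \<noteq> {}\<close> by blast
    then show "(0, 0) \<in> \<Union>\<C>"
      using dominated_linear_graph_zero[OF dom[OF \<open>G \<in> \<C>\<close>]] by blast
  next
    fix x a y b assume "(x, a) \<in> \<Union>\<C>" "(y, b) \<in> \<Union>\<C>"
    then obtain G where "G \<in> \<C>" "(x, a) \<in> G" "(y, b) \<in> G" using common by blast
    then show "(x + y, a + b) \<in> \<Union>\<C>"
      using dominated_linear_graph_add[OF dom[OF \<open>G \<in> \<C>\<close>]] by blast
  next
    fix c x a assume "(x, a) \<in> \<Union>\<C>"
    then obtain G where "G \<in> \<C>" "(x, a) \<in> G" by blast
    then show "(c *\<^sub>R x, c * a) \<in> \<Union>\<C>"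
      using dominated_linear_graph_scaleR[OF dom[OF \<open>G \<in> \<C>\<close>]] by blast
  next
    fix x a b assume "(x, a) \<in> \<Union>\<C>" "(x, b) \<in> \<Union>\<C>"
    then obtain G where "G \<in> \<C>" "(x, a) \<in> G" "(x, b) \<in> G" using common by blast
    then show "a = b"
      using dominated_linear_graph_unique[OF dom[OF \<open>G \<in> \<C>\<close>]] by blast
  next
    fix x a assume "(x, a) \<in> \<Union>\<C>"
    then obtain G where "G \<in> \<C>" "(x, a) \<in> G" by blast
    then show "a \<le> norm x"
      using dominated_linear_graph_le_norm[OF dom[OF \<open>G \<in> \<C>\<close>]] by blast
  qed
qed

lemma dominated_linear_graph_total_functional:
  assumes G: "dominated_linear_graph G" and total: "fst ` G = UNIV"
  obtains \<phi> where "bounded_linear \<phi>" "\<And>x. \<bar>\<phi> x\<bar> \<le> norm x" "\<And>x a. (x, a) \<in> G \<Longrightarrow> \<phi> x = a"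
proof -
  define \<phi> where "\<phi> x = (THE a. (x, a) \<in> G)" for x
  have "\<exists>!a. (x, a) \<in> G" for x
    using total dominated_linear_graph_unique[OF G] by (metis UNIV_I fst_conv imageE prod.collapse)
  then have graph: "(x, \<phi> x) \<in> G" for x
    unfolding \<phi>_def by (rule theI')
  have eval: "\<phi> x = a" if "(x, a) \<in> G" for x a
    using graph that dominated_linear_graph_unique[OF G] by blast
  have bound: "\<bar>\<phi> x\<bar> \<le> norm x" for x
    using dominated_linear_graph_le_norm[OF G graph]
      dominated_linear_graph_le_norm[OF G dominated_linear_graph_scaleR[OF G graph, of "-1"]]
    by (simp add: abs_le_iff)
  have "bounded_linear \<phi>"
  proof (rule bounded_linear_intro[where K = 1])
    show "\<phi> (x + y) = \<phi> x + \<phi> y" for x y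
      using eval[OF dominated_linear_graph_add[OF G graph graph]] .
    show "\<phi> (r *\<^sub>R x) = r *\<^sub>R \<phi> x" for r x
      using eval[OF dominated_linear_graph_scaleR[OF G graph]] by simp
    show "norm (\<phi> x) \<le> norm x * 1" for x
      using bound by simp
  qed
  then show thesis
    using that bound eval by blast
qed

lemma dominated_linear_graph_line:
  "dominated_linear_graph (range (\<lambda>t. (t *\<^sub>R e, t * norm e)))"
  unfolding dominated_linear_graph_def
proof (intro conjI allI impI)
  show "(0, 0) \<in> range (\<lambda>t. (t *\<^sub>R e, t * norm e))"
    by (rule image_eqI[where x = 0]) simp_all
next
  fix x a y b assume "(x, a) \<in> range (\<lambda>t. (t *\<^sub>R e, t * norm e))"
    "(y, b) \<in> range (\<lambda>t. (t *\<^sub>R e, t * norm e))"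
  then obtain s t where "x = s *\<^sub>R e" "a = s * norm e" "y = t *\<^sub>R e" "b = t * norm e"
    by (auto simp only: image_iff Pair_inject)
  then show "(x + y, a + b) \<in> range (\<lambda>t. (t *\<^sub>R e, t * norm e))"
    by (intro image_eqI[where x = "s + t"]) (simp_all add: scaleR_add_left distrib_right)
next
  fix c x a assume "(x, a) \<in> range (\<lambda>t. (t *\<^sub>R e, t * norm e))"
  then obtain t where "x = t *\<^sub>R e" "a = t * norm e"
    by (auto simp only: image_iff Pair_inject)
  then show "(c *\<^sub>R x, c * a) \<in> range (\<lambda>t. (t *\<^sub>R e, t * norm e))"
    by (intro image_eqI[where x = "c * t"]) simp_all
next
  fix x a b assume xa: "(x, a) \<in> range (\<lambda>t. (t *\<^sub>R e, t * norm e))"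
    and xb: "(x, b) \<in> range (\<lambda>t. (t *\<^sub>R e, t * norm e))"
  obtain s where "x = s *\<^sub>R e" "a = s * norm e" using xa by blast
  moreover obtain t where "x = t *\<^sub>R e" "b = t * norm e" using xb by blast
  ultimately have "s = t \<or> e = 0"
    by auto
  then show "a = b"
    using \<open>a = s * norm e\<close> \<open>b = t * norm e\<close> by auto
next
  fix x a assume "(x, a) \<in> range (\<lambda>t. (t *\<^sub>R e, t * norm e))"
  then obtain t where "x = t *\<^sub>R e" "a = t * norm e"
    by (auto simp only: image_iff Pair_inject)
  then show "a \<le> norm x"
    by (simp add: mult_right_mono)
qed

lemma exists_norming_functional:
  fixes e :: "'a::real_normed_vector"
  obtains \<phi> where "bounded_linear \<phi>" "\<And>x. \<bar>\<phi> x\<bar> \<le> norm x" "\<phi> e = norm e"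
proof -
  define L where "L = range (\<lambda>t. (t *\<^sub>R e, t * norm e))"
  define \<A> where "\<A> = {G. dominated_linear_graph G \<and> L \<subseteq> G}"
  have "L \<in> \<A>"
    unfolding \<A>_def L_def using dominated_linear_graph_line by blast
  moreover have "\<Union>\<C> \<in> \<A>" if "\<C> \<noteq> {}" and chain: "subset.chain \<A> \<C>" for \<C>
  proof -
    have "\<C> \<subseteq> \<A>" "chain\<^sub>\<subseteq> \<C>"
      using chain unfolding subset.chain_def chain_subset_def by auto
    then have "dominated_linear_graph (\<Union>\<C>)"
      using dominated_linear_graph_Union_chain[OF \<open>\<C> \<noteq> {}\<close>] unfolding \<A>_def by blast
    moreover obtain G where "G \<in> \<C>"
      using \<open>\<C> \<noteq> {}\<close> by blast
    then have "L \<subseteq> \<Union>\<C>"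
      using \<open>\<C> \<subseteq> \<A>\<close> unfolding \<A>_def by blast
    ultimately show ?thesis
      unfolding \<A>_def by blast
  qed
  ultimately obtain M where "M \<in> \<A>" and maximal: "\<And>G. G \<in> \<A> \<Longrightarrow> M \<subseteq> G \<Longrightarrow> G = M"
    using subset_Zorn_nonempty[of \<A>] by blast
  then have M: "dominated_linear_graph M" and "L \<subseteq> M"
    unfolding \<A>_def by auto
  have "fst ` M = UNIV"
  proof (rule ccontr)
    assume "fst ` M \<noteq> UNIV"
    then obtain y where "y \<notin> fst ` M" by blast
    with dominated_linear_graph_extend[OF M] obtain G where "dominated_linear_graph G" "M \<subset> G"
      by blast
    moreover from this have "G \<in> \<A>"
      using \<open>L \<subseteq> M\<close> unfolding \<A>_def by blast
    ultimately show False
      using maximal[of G] by blast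
  qed
  then obtain \<phi> where "bounded_linear \<phi>" "\<And>x. \<bar>\<phi> x\<bar> \<le> norm x"
    and graph: "\<And>x a. (x, a) \<in> M \<Longrightarrow> \<phi> x = a"
    using dominated_linear_graph_total_functional[OF M] by blast
  moreover have "(1 *\<^sub>R e, 1 * norm e) \<in> M"
    using \<open>L \<subseteq> M\<close> unfolding L_def by blast
  then have "\<phi> e = norm e"
    using graph by simp
  ultimately show thesis
    using that by blast
qed

lemma interior_blinfun_vanishing_at:
  fixes e :: "'a::real_normed_vector"
  assumes "e \<noteq> 0"
  shows "interior {\<psi>::'a \<Rightarrow>\<^sub>L real. \<psi> e = 0} = {}"
proof (rule ccontr)
  assume "interior {\<psi>::'a \<Rightarrow>\<^sub>L real. \<psi> e = 0} \<noteq> {}"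
  then obtain \<psi>\<^sub>0 r where "r > 0" and ball: "ball \<psi>\<^sub>0 r \<subseteq> {\<psi>::'a \<Rightarrow>\<^sub>L real. \<psi> e = 0}"
    by (meson ex_in_conv mem_interior)
  obtain \<phi> where "bounded_linear \<phi>" "\<phi> e = norm e"
    using exists_norming_functional by blast
  have \<phi>_apply: "blinfun_apply (Blinfun \<phi>) = \<phi>"
    using \<open>bounded_linear \<phi>\<close> by (rule bounded_linear_Blinfun_apply)
  then have "Blinfun \<phi> \<noteq> 0"
    using \<open>e \<noteq> 0\<close> \<open>\<phi> e = norm e\<close> by auto
  define \<psi> where "\<psi> = (r / (2 * norm (Blinfun \<phi>))) *\<^sub>R Blinfun \<phi>"
  have "\<psi> e \<noteq> 0"
    using \<open>r > 0\<close> \<open>e \<noteq> 0\<close> \<open>\<phi> e = norm e\<close> \<open>Blinfun \<phi> \<noteq> 0\<close>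
    by (simp add: \<psi>_def \<phi>_apply blinfun.scaleR_left)
  have "norm \<psi> < r"
    using \<open>r > 0\<close> \<open>Blinfun \<phi> \<noteq> 0\<close> by (simp add: \<psi>_def)
  then have "\<psi>\<^sub>0 \<in> ball \<psi>\<^sub>0 r" "\<psi>\<^sub>0 + \<psi> \<in> ball \<psi>\<^sub>0 r"
    using \<open>r > 0\<close> by (auto simp: dist_norm)
  then have "\<psi>\<^sub>0 e = 0" "(\<psi>\<^sub>0 + \<psi>) e = 0"
    using ball by blast+
  then show False
    using \<open>\<psi> e \<noteq> 0\<close> by (simp add: blinfun.add_left)
qed

lemma exists_functional_nonvanishing_on_sequence:
  fixes e :: "nat \<Rightarrow> 'a::real_normed_vector"
  assumes "\<And>k. e k \<noteq> 0"
  obtains \<phi> :: "'a \<Rightarrow> real" where "bounded_linear \<phi>" "\<And>k. \<phi> (e k) \<noteq> 0"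
proof -
  define Z where "Z k = {\<psi>::'a \<Rightarrow>\<^sub>L real. \<psi> (e k) = 0}" for k
  have "closedin Met_TC.mtopology (Z k) \<and> Met_TC.mtopology interior_of Z k = {}" for k
    using interior_blinfun_vanishing_at[OF assms]
    by (simp add: Z_def closed_Collect_eq continuous_intros)
  then have "Met_TC.mtopology interior_of \<Union>(range Z) = {}"
    by (intro Met_TC.metric_Baire_category_alt) (auto simp: complete_UNIV)
  then have "\<Union>(range Z) \<noteq> UNIV"
    by auto
  then obtain \<psi> where "\<And>k. \<psi> \<notin> Z k"
    by blast
  then show thesis
    by (intro that[of "blinfun_apply \<psi>"] blinfun.bounded_linear_right) (simp add: Z_def)
qed

lemma tendsto_zero_disjoint_supp:
  assumes "disjoint_family (\<lambda>k. supp (g k))"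
  shows "(\<lambda>k. c k * g k x) \<longlonglongrightarrow> 0"
proof (cases "\<exists>j. x \<in> supp (g j)")
  case True
  then obtain j where "x \<in> supp (g j)" by blast
  have "c k * g k x = 0" if "Suc j \<le> k" for k
  proof -
    have "supp (g k) \<inter> supp (g j) = {}"
      using that by (intro disjoint_family_onD[OF assms]) auto
    then have "x \<notin> supp (g k)"
      using \<open>x \<in> supp (g j)\<close> by blast
    then show ?thesis
      by (simp add: supp_def)
  qed
  then have "\<forall>\<^sub>F k in sequentially. c k * g k x = 0"
    by (rule eventually_sequentiallyI)
  then show ?thesis
    by (rule tendsto_eventually)
next
  case False
  then show ?thesis
    by (simp add: supp_def)
qed

lemma linear_on_C_scale:
  assumes "linear_on_C T" "continuous_on UNIV f"
  shows "T (\<lambda>x. c * f x) = c *\<^sub>R T f"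
  using assms unfolding linear_on_C_def by simp

lemma seq_cont_Cp_weakD:
  fixes \<phi> :: "'e::real_normed_vector \<Rightarrow> real"
  assumes "seq_cont_Cp_weak T" "\<And>n. continuous_on UNIV (fs n)" "continuous_on UNIV f"
    and "\<And>x. (\<lambda>n. fs n x) \<longlonglongrightarrow> f x" and "bounded_linear \<phi>"
  shows "(\<lambda>n. \<phi> (T (fs n))) \<longlonglongrightarrow> \<phi> (T f)"
proof -
  have "(\<forall>n. continuous_on UNIV (fs n)) \<and> continuous_on UNIV f \<and> (\<forall>x. (\<lambda>n. fs n x) \<longlonglongrightarrow> f x)"
    using assms(2-4) by simp
  with assms(1) have "\<forall>\<phi>::'e \<Rightarrow> real. bounded_linear \<phi> \<longrightarrow> (\<lambda>n. \<phi> (T (fs n))) \<longlonglongrightarrow> \<phi> (T f)"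
    unfolding seq_cont_Cp_weak_def by (elim allE[of _ fs] allE[of _ f] mp)
  with assms(5) show ?thesis
    by blast
qed

lemma seq_cont_Cp_weak_disjoint_supp:
  fixes T :: "('a::topological_space \<Rightarrow> real) \<Rightarrow> 'e::real_normed_vector"
    and \<phi> :: "'e \<Rightarrow> real"
  assumes "linear_on_C T" "seq_cont_Cp_weak T" "bounded_linear \<phi>"
    and cont: "\<And>k. continuous_on UNIV (g k)" and disj: "disjoint_family (\<lambda>k. supp (g k))"
  shows "(\<lambda>k. c k * \<phi> (T (g k))) \<longlonglongrightarrow> 0"
proof -
  have "(\<lambda>k. \<phi> (T (\<lambda>x. c k * g k x))) \<longlonglongrightarrow> \<phi> (T (\<lambda>x. 0 * 0))"
    using tendsto_zero_disjoint_supp[OF disj]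
    by (intro seq_cont_Cp_weakD[OF \<open>seq_cont_Cp_weak T\<close> _ _ _ \<open>bounded_linear \<phi>\<close>])
      (simp_all add: cont continuous_intros)
  moreover have "T (\<lambda>x. 0 * 0) = 0"
    using linear_on_C_scale[OF \<open>linear_on_C T\<close>, of "\<lambda>x. 0" 0] by simp
  moreover have "\<phi> (T (\<lambda>x. c k * g k x)) = c k * \<phi> (T (g k))" for k
    using linear_on_C_scale[OF \<open>linear_on_C T\<close> cont] \<open>bounded_linear \<phi>\<close>
    by (simp add: linear_simps)
  ultimately show ?thesis
    using linear_simps(3)[OF \<open>bounded_linear \<phi>\<close>] by simp
qed

lemma infinite_indices_disjoint_supp_sequence:
  fixes U :: "nat \<Rightarrow> 'a::topological_space set"
  assumes "infinite {n. \<exists>f. continuous_on UNIV f \<and> supp f \<subseteq> U n \<and> P f}"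
    and "disjoint_family U"
  obtains g :: "nat \<Rightarrow> 'a \<Rightarrow> real"
  where "\<And>k. continuous_on UNIV (g k)" "\<And>k. P (g k)" "disjoint_family (\<lambda>k. supp (g k))"
proof -
  obtain s :: "nat \<Rightarrow> nat" where "strict_mono s"
    and s: "\<And>k. s k \<in> {n. \<exists>f. continuous_on UNIV f \<and> supp f \<subseteq> U n \<and> P f}"
    using infinite_enumerate[OF assms(1)] by blast
  from s have "\<forall>k. \<exists>f. continuous_on UNIV f \<and> supp f \<subseteq> U (s k) \<and> P f"
    by simp
  then obtain g where g: "\<forall>k. continuous_on UNIV (g k) \<and> supp (g k) \<subseteq> U (s k) \<and> P (g k)"
    by (rule choice[THEN exE])
  have "disjoint_family (\<lambda>k. supp (g k))"
    unfolding disjoint_family_on_def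
  proof (intro ballI impI)
    fix j k :: nat assume "j \<noteq> k"
    then have "U (s j) \<inter> U (s k) = {}"
      using disjoint_family_onD[OF assms(2)] strict_mono_eq[OF \<open>strict_mono s\<close>] by simp
    then show "supp (g j) \<inter> supp (g k) = {}"
      using g by blast
  qed
  with g show thesis
    using that by blast
qed

theorem lemma2p1:
  fixes T :: "('a::topological_space \<Rightarrow> real) \<Rightarrow> 'e::banach"
  assumes "tychonoff_type TYPE('a)"
    and "infinite (UNIV :: 'a set)"
    and "linear_on_C T"
    and "seq_cont_Cp_weak T"
    and "\<forall>n. open (U n) \<and> U n \<noteq> {}"
    and "\<forall>m n. m \<noteq> n \<longrightarrow> U m \<inter> U n = {}"
  shows "\<exists>N::nat. \<forall>n\<ge>N. \<forall>f. continuous_on UNIV f \<and> supp f \<subseteq> U n \<longrightarrow> T f = 0"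
proof (rule ccontr)
  assume "\<not> ?thesis"
  then have "\<forall>m. \<exists>n\<ge>m. \<exists>f. continuous_on UNIV f \<and> supp f \<subseteq> U n \<and> T f \<noteq> 0"
    by blast
  then have "infinite {n. \<exists>f. continuous_on UNIV f \<and> supp f \<subseteq> U n \<and> T f \<noteq> 0}"
    unfolding infinite_nat_iff_unbounded_le by simp
  moreover have "disjoint_family U"
    using assms(6) unfolding disjoint_family_on_def by simp
  ultimately obtain g :: "nat \<Rightarrow> 'a \<Rightarrow> real"
    where "\<And>k. continuous_on UNIV (g k)" and nonzero: "\<And>k. T (g k) \<noteq> 0"
    and "disjoint_family (\<lambda>k. supp (g k))"
    by (rule infinite_indices_disjoint_supp_sequence) blast
  obtain \<phi> :: "'e \<Rightarrow> real" where "bounded_linear \<phi>" and nonvanishing: "\<And>k. \<phi> (T (g k)) \<noteq> 0"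
    using exists_functional_nonvanishing_on_sequence[of "\<lambda>k. T (g k)"] nonzero by blast
  have "(\<lambda>k. inverse (\<phi> (T (g k))) * \<phi> (T (g k))) \<longlonglongrightarrow> 0"
    by (rule seq_cont_Cp_weak_disjoint_supp) fact+
  then show False
    using nonvanishing by (simp add: LIMSEQ_const_iff)
qed

end
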